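(* Let $V$ be a complex normed vector space, $x=\{x_n\}_{n=1}^\infty\in l^{\infty}(V)$ and $v\in V$. Then $x$ is strongly almost convergent to $v$ if and only if $$\lim_{n\rightarrow\infty}\frac{1}{n}\sum_{i=0}^{n-1}x_{i+j}=v$$ uniformly in $j\in\mathbb{N}$, i.e. $\sup_{j\in\mathbb{N}}\left\|\frac1n\sum_{i=0}^{n-1}x_{i+j}-v\right\|_V\to0$ as $n\to\infty$.
   Context: $\mathbb{N}=\{1,2,3,\dots\}$. $l^{\infty}(V)$ is the space of bounded sequences $x=\{x_n\}_{n=1}^\infty$ in $V$ with norm $\|x\|_\infty=\sup_n\|x_n\|_V$. For $v\in V$, $\widetilde v=\{v,v,\dots\}$. $T$ is the left shift: $T\{x_1,x_2,\dots\}=\{x_2,x_3,\dots\}$. A Banach limit functional is a bounded linear functional $L$ on $l^\infty(V)$ with $\|L\|\le1$ and $L(Tx)=L(x)$ for all $x$. A sequence $x\in l^\infty(V)$ is strongly almost convergent to $v\in V$ if $L(x)=L(\widetilde v)$ for every Banach limit functional $L$. *)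

theory Defs
  imports "HOL-Analysis.Analysis"
begin

text \<open>A complex normed vector space is modelled as a real normed vector space
  together with a real-linear operator J (multiplication by the imaginary unit)
  with J (J v) = - v, such that the induced complex scalar multiplication
  c v = Re c v + Im c J v is absolutely homogeneous for the norm.\<close>

definition cscale :: "('a::real_normed_vector \<Rightarrow> 'a) \<Rightarrow> complex \<Rightarrow> 'a \<Rightarrow> 'a" where
  "cscale J c v = Re c *\<^sub>R v + Im c *\<^sub>R J v"

definition complex_structure :: "('a::real_normed_vector \<Rightarrow> 'a) \<Rightarrow> bool" where
  "complex_structure J \<longleftrightarrow> linear J \<and> (\<forall>v. J (J v) = - v) \<and>
     (\<forall>c v. norm (cscale J c v) = cmod c * norm v)"

text \<open>l-infinity of V: bounded sequences (indexed from 0), with the sup norm.\<close>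

definition linf :: "(nat \<Rightarrow> 'a::real_normed_vector) set" where
  "linf = {x. bounded (range x)}"

definition linf_norm :: "(nat \<Rightarrow> 'a::real_normed_vector) \<Rightarrow> real" where
  "linf_norm x = (SUP n. norm (x n))"

definition banach_limit :: "('a::real_normed_vector \<Rightarrow> 'a) \<Rightarrow> ((nat \<Rightarrow> 'a) \<Rightarrow> complex) \<Rightarrow> bool" where
  "banach_limit J L \<longleftrightarrow>
     (\<forall>x\<in>linf. \<forall>y\<in>linf. L (\<lambda>n. x n + y n) = L x + L y) \<and>
     (\<forall>c. \<forall>x\<in>linf. L (\<lambda>n. cscale J c (x n)) = c * L x) \<and>
     (\<forall>x\<in>linf. cmod (L x) \<le> linf_norm x) \<and>
     (\<forall>x\<in>linf. L (\<lambda>n. x (Suc n)) = L x)"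

definition strongly_almost_convergent ::
  "('a::real_normed_vector \<Rightarrow> 'a) \<Rightarrow> (nat \<Rightarrow> 'a) \<Rightarrow> 'a \<Rightarrow> bool" where
  "strongly_almost_convergent J x v \<longleftrightarrow>
     (\<forall>L. banach_limit J L \<longrightarrow> L x = L (\<lambda>_. v))"

end

theory Submission
  imports Defs
begin

text \<open>
  For a bounded sequence y put q(y) = limsup_n sup_j |(1/n) (y j + ... + y (j + n - 1))|.
  The proof shows that, for every bounded d, q(d) is the largest value of |L d| over all
  Banach limits L, and that this maximum is attained.  Then x is strongly almost
  convergent to v iff q(x - v) = 0, and q(x - v) = 0 says precisely that the Cesaro
  means of x converge to v uniformly in the window start.
\<close>

definition sublinear :: "('b::real_vector \<Rightarrow> real) \<Rightarrow> bool" where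
  "sublinear p \<longleftrightarrow> (\<forall>a b. p (a + b) \<le> p a + p b) \<and> (\<forall>c a. 0 \<le> c \<longrightarrow> p (c *\<^sub>R a) = c * p a)"

lemma sublinearD:
  assumes "sublinear p"
  shows sublinear_add: "p (a + b) \<le> p a + p b"
    and sublinear_scale: "0 \<le> c \<Longrightarrow> p (c *\<^sub>R a) = c * p a"
  using assms unfolding sublinear_def by auto

lemma sublinear_neg:
  assumes "sublinear p"
  shows "- p (- a) \<le> p a"
proof -
  have "p 0 = 0" using sublinear_scale[OF assms, of 0 0] by simp
  then show ?thesis using sublinear_add[OF assms, of a "- a"] by simp
qed

text \<open>Graphs of partial linear functionals on a real vector space which are dominated
  by a function p: subspaces of the product with R, lying below the graph of p, and
  single-valued (equivalently, containing no point (0, r) with r non-zero).\<close>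

definition dominated_graph :: "('b::real_vector \<Rightarrow> real) \<Rightarrow> ('b \<times> real) set \<Rightarrow> bool" where
  "dominated_graph p G \<longleftrightarrow>
     subspace G \<and> (\<forall>(a, r)\<in>G. r \<le> p a) \<and> (\<forall>r. (0, r) \<in> G \<longrightarrow> r = 0)"

lemma dominated_graph_functional:
  assumes "dominated_graph p G" "(a, r) \<in> G" "(a, s) \<in> G"
  shows "r = s"
proof -
  have "(a, r) - (a, s) \<in> G"
    using assms subspace_diff unfolding dominated_graph_def by blast
  then show ?thesis using assms(1) unfolding dominated_graph_def by auto
qed

lemma dominated_graph_line:
  assumes p: "sublinear p"
  shows "dominated_graph p (range (\<lambda>t. (t *\<^sub>R z, t * p z)))"
proof -
  have "subspace (range (\<lambda>t. (t *\<^sub>R z, t * p z)))"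
    unfolding subspace_def
  proof (intro conjI ballI allI)
    show "0 \<in> range (\<lambda>t. (t *\<^sub>R z, t * p z))"
      by (rule image_eqI[of _ _ 0]) (auto simp: zero_prod_def)
  next
    fix u w assume "u \<in> range (\<lambda>t. (t *\<^sub>R z, t * p z))" "w \<in> range (\<lambda>t. (t *\<^sub>R z, t * p z))"
    then obtain s t where "u = (s *\<^sub>R z, s * p z)" "w = (t *\<^sub>R z, t * p z)" by auto
    then show "u + w \<in> range (\<lambda>t. (t *\<^sub>R z, t * p z))"
      by (intro image_eqI[of _ _ "s + t"]) (auto simp: algebra_simps)
  next
    fix c u assume "u \<in> range (\<lambda>t. (t *\<^sub>R z, t * p z))"
    then obtain s where "u = (s *\<^sub>R z, s * p z)" by auto
    then show "c *\<^sub>R u \<in> range (\<lambda>t. (t *\<^sub>R z, t * p z))"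
      by (intro image_eqI[of _ _ "c * s"]) auto
  qed
  moreover have "t * p z \<le> p (t *\<^sub>R z)" for t
  proof (cases "t \<ge> 0")
    case True then show ?thesis using sublinear_scale[OF p] by simp
  next
    case False
    have "t * p z \<le> (- t) * p (- z)"
      using mult_left_mono_neg[OF sublinear_neg[OF p, of z], of t] False by simp
    also have "\<dots> = p (t *\<^sub>R z)" using sublinear_scale[OF p, of "- t" "- z"] False by simp
    finally show ?thesis .
  qed
  moreover have "r = 0" if "(0, r) \<in> range (\<lambda>t. (t *\<^sub>R z, t * p z))" for r
    using that sublinear_scale[OF p, of 0 0] by auto
  ultimately show ?thesis unfolding dominated_graph_def by auto
qed

lemma dominated_graph_Union_chain:
  assumes C: "chain\<^sub>\<subseteq> C" "C \<noteq> {}" and CD: "\<And>G. G \<in> C \<Longrightarrow> dominated_graph p G"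
  shows "dominated_graph p (\<Union>C)"
proof -
  have common: "\<exists>G\<in>C. u \<in> G \<and> w \<in> G" if "u \<in> \<Union>C" "w \<in> \<Union>C" for u w
    using that C(1) unfolding chain_subset_def by blast
  have "subspace (\<Union>C)"
    unfolding subspace_def
  proof (intro conjI ballI allI)
    show "0 \<in> \<Union>C" using C(2) CD subspace_0 unfolding dominated_graph_def by blast
  next
    fix u w assume "u \<in> \<Union>C" "w \<in> \<Union>C"
    then show "u + w \<in> \<Union>C"
      using common CD subspace_add unfolding dominated_graph_def by blast
  next
    fix c u assume "u \<in> \<Union>C"
    then show "c *\<^sub>R u \<in> \<Union>C" using CD subspace_scale unfolding dominated_graph_def by blast
  qed
  then show ?thesis using CD unfolding dominated_graph_def by blast
qed

text \<open>The key inequality of the one-step extension: for graph points (a, r), (b, s)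
  the values r - p(a - w) never exceed p(b + w) - s, so a value c fits between them.\<close>

lemma dominated_graph_extension_value:
  assumes p: "sublinear p" and G: "dominated_graph p G"
  obtains c where "\<And>a r. (a, r) \<in> G \<Longrightarrow> r - p (a - w) \<le> c"
    and "\<And>b s. (b, s) \<in> G \<Longrightarrow> c \<le> p (b + w) - s"
proof -
  have key: "r - p (a - w) \<le> p (b + w) - s" if "(a, r) \<in> G" "(b, s) \<in> G" for a r b s
  proof -
    have "(a, r) + (b, s) \<in> G" using G that subspace_add unfolding dominated_graph_def by blast
    then have "r + s \<le> p ((a - w) + (b + w))" using G unfolding dominated_graph_def by auto
    also have "\<dots> \<le> p (a - w) + p (b + w)" by (rule sublinear_add[OF p])
    finally show ?thesis by simp
  qed
  define S where "S = {r - p (a - w) | a r. (a, r) \<in> G}"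
  have 0: "(0, 0) \<in> G"
    using G subspace_0[of G] unfolding dominated_graph_def by (simp add: zero_prod_def)
  have ne: "S \<noteq> {}" using 0 unfolding S_def by blast
  have bdd: "bdd_above S"
    unfolding bdd_above_def S_def by (rule exI[of _ "p w"]) (auto dest: key[OF _ 0])
  show ?thesis
  proof (rule that[of "Sup S"])
    fix a r assume "(a, r) \<in> G"
    then have "r - p (a - w) \<in> S" unfolding S_def by blast
    then show "r - p (a - w) \<le> Sup S" using bdd by (rule cSup_upper)
  next
    fix b s assume bs: "(b, s) \<in> G"
    show "Sup S \<le> p (b + w) - s"
      by (rule cSup_least[OF ne]) (auto simp: S_def dest: key[OF _ bs])
  qed
qed

definition graph_extend :: "('b::real_vector \<times> real) set \<Rightarrow> 'b \<Rightarrow> real \<Rightarrow> ('b \<times> real) set" where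
  "graph_extend G w c = {(a + t *\<^sub>R w, r + t * c) | a r t. (a, r) \<in> G}"

lemma subspace_graph_extend:
  assumes G: "subspace G"
  shows "subspace (graph_extend G w c)"
  unfolding subspace_def
proof (intro conjI ballI allI)
  show "0 \<in> graph_extend G w c"
    using subspace_0[OF G] unfolding graph_extend_def zero_prod_def by force
next
  fix u u' assume "u \<in> graph_extend G w c" "u' \<in> graph_extend G w c"
  then obtain a r t b s t' where u: "u = (a + t *\<^sub>R w, r + t * c)" "(a, r) \<in> G"
    and u': "u' = (b + t' *\<^sub>R w, s + t' * c)" "(b, s) \<in> G" unfolding graph_extend_def by blast
  have "(a + b, r + s) \<in> G" using subspace_add[OF G u(2) u'(2)] by simp
  then show "u + u' \<in> graph_extend G w c" unfolding graph_extend_def u u'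
    by (intro CollectI exI[of _ "a + b"] exI[of _ "r + s"] exI[of _ "t + t'"])
       (auto simp: algebra_simps)
next
  fix k u assume "u \<in> graph_extend G w c"
  then obtain a r t where u: "u = (a + t *\<^sub>R w, r + t * c)" "(a, r) \<in> G"
    unfolding graph_extend_def by blast
  have "(k *\<^sub>R a, k * r) \<in> G" using subspace_scale[OF G u(2), of k] by simp
  then show "k *\<^sub>R u \<in> graph_extend G w c" unfolding graph_extend_def u
    by (intro CollectI exI[of _ "k *\<^sub>R a"] exI[of _ "k * r"] exI[of _ "k * t"])
       (auto simp: algebra_simps)
qed

text \<open>With c chosen as above, the extended graph is still dominated by p: rescale a
  point (a + t w, r + t c) by 1/|t| and use the bound on the corresponding side.\<close>

lemma graph_extend_dominated:
  assumes p: "sublinear p" and G: "subspace G" "\<forall>(a, r)\<in>G. r \<le> p a"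
    and low: "\<And>a r. (a, r) \<in> G \<Longrightarrow> r - p (a - w) \<le> c"
    and up: "\<And>b s. (b, s) \<in> G \<Longrightarrow> c \<le> p (b + w) - s"
    and ar: "(a, r) \<in> G"
  shows "r + t * c \<le> p (a + t *\<^sub>R w)"
proof -
  have scaled: "((1 / u) *\<^sub>R a, (1 / u) * r) \<in> G" for u
    using subspace_scale[OF G(1) ar, of "1 / u"] by simp
  consider "t > 0" | "t = 0" | "t < 0" by linarith
  then show ?thesis
  proof cases
    case 1
    have "t * c \<le> t * (p ((1 / t) *\<^sub>R a + w) - (1 / t) * r)"
      using up[OF scaled] 1 by (intro mult_left_mono) auto
    also have "\<dots> = p (t *\<^sub>R ((1 / t) *\<^sub>R a + w)) - r"
      using 1 sublinear_scale[OF p] by (simp add: right_diff_distrib)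
    also have "t *\<^sub>R ((1 / t) *\<^sub>R a + w) = a + t *\<^sub>R w" using 1 by (simp add: scaleR_add_right)
    finally show ?thesis by simp
  next
    case 2 then show ?thesis using G(2) ar by auto
  next
    case 3
    define u where "u = - t"
    have u: "u > 0" using 3 by (simp add: u_def)
    have "a + t *\<^sub>R w = u *\<^sub>R ((1 / u) *\<^sub>R a - w)"
      using u by (simp add: u_def scaleR_diff_right)
    then have "p (a + t *\<^sub>R w) = u * p ((1 / u) *\<^sub>R a - w)"
      using sublinear_scale[OF p] u by simp
    then have "r - p (a + t *\<^sub>R w) = u * ((1 / u) * r - p ((1 / u) *\<^sub>R a - w))"
      using u by (simp add: right_diff_distrib)
    also have "\<dots> \<le> u * c" using low[OF scaled] u by (intro mult_left_mono) auto
    finally show ?thesis by (simp add: u_def)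
  qed
qed

lemma dominated_graph_extension:
  assumes p: "sublinear p" and G: "dominated_graph p G" and w: "\<nexists>r. (w, r) \<in> G"
  obtains G' where "dominated_graph p G'" "G \<subseteq> G'" "G' \<noteq> G"
proof -
  obtain c where low: "\<And>a r. (a, r) \<in> G \<Longrightarrow> r - p (a - w) \<le> c"
    and up: "\<And>b s. (b, s) \<in> G \<Longrightarrow> c \<le> p (b + w) - s"
    using dominated_graph_extension_value[OF p G] by metis
  have sub: "subspace G" and dom: "\<forall>(a, r)\<in>G. r \<le> p a"
    using G unfolding dominated_graph_def by auto
  have 0: "(0, 0) \<in> G" using subspace_0[OF sub] by (simp add: zero_prod_def)
  have functional: "r' = 0" if r': "(0, r') \<in> graph_extend G w c" for r'
  proof -
    obtain a r t where e: "0 = a + t *\<^sub>R w" "r' = r + t * c" and ar: "(a, r) \<in> G"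
      using r' unfolding graph_extend_def by blast
    have "t = 0"
    proof (rule ccontr)
      assume t: "t \<noteq> 0"
      have "a = - (t *\<^sub>R w)" using e(1)[symmetric] by (simp add: add_eq_0_iff2)
      then have "(-1 / t) *\<^sub>R a = w" using t by simp
      then show False using subspace_scale[OF sub ar, of "-1 / t"] w by simp
    qed
    then show ?thesis using e ar G unfolding dominated_graph_def by auto
  qed
  have dominated: "r' \<le> p a'" if ar': "(a', r') \<in> graph_extend G w c" for a' r'
  proof -
    obtain a r t where "a' = a + t *\<^sub>R w" "r' = r + t * c" "(a, r) \<in> G"
      using ar' unfolding graph_extend_def by blast
    then show ?thesis using graph_extend_dominated[OF p sub dom low up] by simp
  qed
  have "dominated_graph p (graph_extend G w c)"
    unfolding dominated_graph_def using subspace_graph_extend[OF sub] functional dominated by blast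
  moreover have "G \<subseteq> graph_extend G w c" unfolding graph_extend_def by force
  moreover have "(w, c) \<in> graph_extend G w c" using 0 unfolding graph_extend_def by force
  ultimately show ?thesis using that w by blast
qed

lemma total_dominated_graph_linear:
  assumes G: "dominated_graph p G" and total: "\<And>w. \<exists>r. (w, r) \<in> G"
  obtains f where "linear f" "\<And>a. f a \<le> p a" "\<And>a r. (a, r) \<in> G \<Longrightarrow> f a = r"
proof -
  define f where "f a = (SOME r. (a, r) \<in> G)" for a
  have fG: "(a, f a) \<in> G" for a unfolding f_def using total by (rule someI_ex)
  have sub: "subspace G" using G unfolding dominated_graph_def by auto
  have on_graph: "f a = r" if "(a, r) \<in> G" for a r
    using dominated_graph_functional[OF G fG that] .
  have "linear f"
  proof (rule linearI)
    fix a b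
    have "(a + b, f a + f b) \<in> G" using subspace_add[OF sub fG fG] by simp
    then show "f (a + b) = f a + f b" by (rule on_graph)
  next
    fix c a
    have "(c *\<^sub>R a, c * f a) \<in> G" using subspace_scale[OF sub fG, of c] by simp
    then show "f (c *\<^sub>R a) = c *\<^sub>R f a" by (simp add: on_graph)
  qed
  moreover have "f a \<le> p a" for a using fG G unfolding dominated_graph_def by auto
  ultimately show ?thesis using that on_graph by blast
qed

text \<open>The functional
  is a maximal (by Zorn's lemma) dominated extension of t z \<mapsto> t p(z).\<close>

theorem Hahn_Banach_sublinear:
  assumes p: "sublinear p"
  obtains f where "linear f" "\<And>a. f a \<le> p a" "f z = p z"
proof -
  define A where "A = {G. dominated_graph p G \<and> (z, p z) \<in> G}"
  have line: "range (\<lambda>t. (t *\<^sub>R z, t * p z)) \<in> A"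
    unfolding A_def using dominated_graph_line[OF p] by (auto intro: image_eqI[of _ _ 1])
  have "\<forall>C\<in>chains A. \<exists>U\<in>A. \<forall>G\<in>C. G \<subseteq> U"
  proof
    fix C assume C: "C \<in> chains A"
    show "\<exists>U\<in>A. \<forall>G\<in>C. G \<subseteq> U"
    proof (cases "C = {}")
      case True then show ?thesis using line by blast
    next
      case False
      have "chain\<^sub>\<subseteq> C" "C \<subseteq> A" using C unfolding chains_def by auto
      then have "\<Union>C \<in> A"
        using dominated_graph_Union_chain[OF _ False] False unfolding A_def by blast
      then show ?thesis by blast
    qed
  qed
  then obtain M where M: "M \<in> A" and max: "\<forall>G\<in>A. M \<subseteq> G \<longrightarrow> G = M"
    by (rule Zorn_Lemma2[THEN bexE])
  have MD: "dominated_graph p M" and Mz: "(z, p z) \<in> M" using M unfolding A_def by auto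
  have total: "\<exists>r. (w, r) \<in> M" for w
  proof (rule ccontr)
    assume "\<nexists>r. (w, r) \<in> M"
    then obtain G' where "dominated_graph p G'" "M \<subseteq> G'" "G' \<noteq> M"
      using dominated_graph_extension[OF p MD] by blast
    then show False using max Mz unfolding A_def by blast
  qed
  obtain f where "linear f" "\<And>a. f a \<le> p a" "\<And>a r. (a, r) \<in> M \<Longrightarrow> f a = r"
    using total_dominated_graph_linear[OF MD total] by blast
  then show ?thesis using that Mz by blast
qed

lemma linf_iff: "y \<in> linf \<longleftrightarrow> (\<exists>B. \<forall>n. norm (y n) \<le> B)"
  unfolding linf_def bounded_iff by auto

lemma linfI: "(\<And>n. norm (y n) \<le> B) \<Longrightarrow> y \<in> linf"
  unfolding linf_iff by blast

lemma linf_norm_ge: "y \<in> linf \<Longrightarrow> norm (y n) \<le> linf_norm y"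
  unfolding linf_norm_def linf_iff by (intro cSUP_upper) (auto simp: bdd_above_def)

lemma linf_norm_nonneg: "y \<in> linf \<Longrightarrow> 0 \<le> linf_norm y"
  using linf_norm_ge[of y 0] norm_ge_zero order_trans by blast

lemma linf_norm_le: "(\<And>n. norm (y n) \<le> B) \<Longrightarrow> linf_norm y \<le> B"
  unfolding linf_norm_def by (rule cSUP_least) auto

lemma norm_add_le_linf_norm:
  assumes "x \<in> linf" "y \<in> linf"
  shows "norm (x n + y n) \<le> linf_norm x + linf_norm y"
proof -
  have "norm (x n + y n) \<le> norm (x n) + norm (y n)" by (rule norm_triangle_ineq)
  also have "\<dots> \<le> linf_norm x + linf_norm y" using assms by (intro add_mono linf_norm_ge)
  finally show ?thesis .
qed

lemma linf_add: "x \<in> linf \<Longrightarrow> y \<in> linf \<Longrightarrow> (\<lambda>n. x n + y n) \<in> linf"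
  by (rule linfI) (rule norm_add_le_linf_norm)

lemma linf_scaleR: "y \<in> linf \<Longrightarrow> (\<lambda>n. c *\<^sub>R y n) \<in> linf"
  by (intro linfI[of _ "\<bar>c\<bar> * linf_norm y"]) (simp add: linf_norm_ge mult_left_mono)

lemma linf_diff: "x \<in> linf \<Longrightarrow> y \<in> linf \<Longrightarrow> (\<lambda>n. x n - y n) \<in> linf"
  using linf_add[of x "\<lambda>n. (-1) *\<^sub>R y n"] linf_scaleR[of y "-1"] by simp

lemma linf_const: "(\<lambda>n. v) \<in> linf"
  unfolding linf_iff by auto

lemma linf_shift: "y \<in> linf \<Longrightarrow> (\<lambda>n. y (k + n)) \<in> linf"
  unfolding linf_iff by auto

lemma linf_sum: "(\<And>i. i \<in> I \<Longrightarrow> y i \<in> linf) \<Longrightarrow> (\<lambda>n. \<Sum>i\<in>I. y i n) \<in> linf"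
  by (induction I rule: infinite_finite_induct) (simp_all add: linf_add linf_const)

lemma linf_norm_cong: "(\<And>n. norm (x n) = norm (y n)) \<Longrightarrow> linf_norm x = linf_norm y"
  unfolding linf_norm_def by simp

lemma linf_norm_add: "x \<in> linf \<Longrightarrow> y \<in> linf \<Longrightarrow> linf_norm (\<lambda>n. x n + y n) \<le> linf_norm x + linf_norm y"
  by (rule linf_norm_le) (rule norm_add_le_linf_norm)

lemma linf_norm_scaleR:
  assumes y: "y \<in> linf"
  shows "linf_norm (\<lambda>n. c *\<^sub>R y n) = \<bar>c\<bar> * linf_norm y"
proof (cases "c = 0")
  case True then show ?thesis by (simp add: linf_norm_def)
next
  case False
  have "linf_norm (\<lambda>n. c *\<^sub>R y n) \<le> \<bar>c\<bar> * linf_norm y"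
    by (intro linf_norm_le) (simp add: linf_norm_ge[OF y] mult_left_mono)
  moreover have "norm (y n) \<le> linf_norm (\<lambda>n. c *\<^sub>R y n) / \<bar>c\<bar>" for n
    using linf_norm_ge[OF linf_scaleR[OF y, of c], of n] False by (simp add: field_simps)
  then have "linf_norm y \<le> linf_norm (\<lambda>n. c *\<^sub>R y n) / \<bar>c\<bar>" by (rule linf_norm_le)
  then have "\<bar>c\<bar> * linf_norm y \<le> linf_norm (\<lambda>n. c *\<^sub>R y n)" using False by (simp add: field_simps)
  ultimately show ?thesis by linarith
qed

text \<open>Over the discrete index set nat, l-infinity is exactly the space of bounded
  continuous functions, which carries the real vector space structure needed for
  Hahn--Banach.\<close>

lemma linf_bcontfun: "y \<in> linf \<Longrightarrow> y \<in> bcontfun"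
  unfolding linf_def bcontfun_def by simp

lemma apply_bcontfun_linf: "apply_bcontfun b \<in> linf"
  unfolding linf_def by simp

lemma Bcontfun_add: "x \<in> linf \<Longrightarrow> y \<in> linf \<Longrightarrow> Bcontfun (\<lambda>n. x n + y n) = Bcontfun x + Bcontfun y"
  by (rule bcontfun_eqI) (simp add: Bcontfun_inverse linf_bcontfun linf_add)

lemma Bcontfun_scaleR: "y \<in> linf \<Longrightarrow> Bcontfun (\<lambda>n. c *\<^sub>R y n) = c *\<^sub>R Bcontfun y"
  by (rule bcontfun_eqI) (simp add: Bcontfun_inverse linf_bcontfun linf_scaleR)

definition avg :: "(nat \<Rightarrow> 'a::real_normed_vector) \<Rightarrow> nat \<Rightarrow> nat \<Rightarrow> 'a" where
  "avg y n j = (1 / real n) *\<^sub>R (\<Sum>i<n. y (i + j))"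

lemma norm_avg_le:
  assumes "\<And>k. norm (y k) \<le> B" "0 \<le> B"
  shows "norm (avg y n j) \<le> B"
proof (cases "n = 0")
  case True then show ?thesis using assms by (simp add: avg_def)
next
  case False
  have "norm (\<Sum>i<n. y (i + j)) \<le> (\<Sum>i<n. norm (y (i + j)))" by (rule norm_sum)
  also have "\<dots> \<le> (\<Sum>i<n. B)" by (intro sum_mono assms(1))
  finally have "norm (\<Sum>i<n. y (i + j)) \<le> real n * B" by simp
  then show ?thesis using False by (simp add: avg_def field_simps)
qed

lemma avg_linf_norm_le: "y \<in> linf \<Longrightarrow> linf_norm (avg y n) \<le> linf_norm y"
  by (intro linf_norm_le norm_avg_le linf_norm_ge linf_norm_nonneg)

lemma avg_linf: "y \<in> linf \<Longrightarrow> avg y n \<in> linf"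
  by (rule linfI[of _ "linf_norm y"]) (intro norm_avg_le linf_norm_ge linf_norm_nonneg)

lemma avg_add: "avg (\<lambda>k. x k + y k) n = (\<lambda>j. avg x n j + avg y n j)"
  by (simp add: avg_def sum.distrib scaleR_add_right fun_eq_iff)

lemma avg_scaleR: "avg (\<lambda>k. c *\<^sub>R y k) n = (\<lambda>j. c *\<^sub>R avg y n j)"
  by (simp add: avg_def scaleR_sum_right[symmetric] fun_eq_iff)

lemma avg_minus_const:
  assumes "n > 0"
  shows "avg (\<lambda>k. x k - v) n j = avg x n j - v"
proof -
  have "avg (\<lambda>k. x k - v) n j = avg x n j - (1 / real n) *\<^sub>R (real n *\<^sub>R v)"
    by (simp add: avg_def sum_subtractf scaleR_diff_right sum_constant_scaleR)
  also have "(1 / real n) *\<^sub>R (real n *\<^sub>R v) = v" using assms by simp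
  finally show ?thesis .
qed

lemma avg_telescope: "avg (\<lambda>k. y (Suc k) - y k) n j = (1 / real n) *\<^sub>R (y (n + j) - y j)"
proof -
  have "(\<Sum>i<n. y (Suc i + j) - y (i + j)) = y (n + j) - y (0 + j)"
    by (rule sum_lessThan_telescope)
  then show ?thesis by (simp add: avg_def)
qed

definition mean_limsup :: "(nat \<Rightarrow> 'a::real_normed_vector) \<Rightarrow> real" where
  "mean_limsup y = real_of_ereal (limsup (\<lambda>n. ereal (linf_norm (avg y n))))"

lemma limsup_bounded_real:
  fixes u :: "nat \<Rightarrow> real"
  assumes "\<And>n. 0 \<le> u n" "\<And>n. u n \<le> K"
  obtains l where "limsup (\<lambda>n. ereal (u n)) = ereal l" "0 \<le> l" "l \<le> K"
proof -
  have "ereal 0 \<le> liminf (\<lambda>n. ereal (u n))" by (rule Liminf_bounded) (simp add: assms)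
  also have "\<dots> \<le> limsup (\<lambda>n. ereal (u n))" by (rule Liminf_le_Limsup) simp
  finally have "ereal 0 \<le> limsup (\<lambda>n. ereal (u n))" .
  moreover have "limsup (\<lambda>n. ereal (u n)) \<le> ereal K" by (rule Limsup_bounded) (simp add: assms)
  ultimately show ?thesis by (cases "limsup (\<lambda>n. ereal (u n))") (auto intro: that)
qed

lemma mean_limsup:
  assumes y: "y \<in> linf"
  shows mean_limsup_limsup: "limsup (\<lambda>n. ereal (linf_norm (avg y n))) = ereal (mean_limsup y)"
    and mean_limsup_nonneg: "0 \<le> mean_limsup y"
    and mean_limsup_le_linf_norm: "mean_limsup y \<le> linf_norm y"
proof -
  obtain l where "limsup (\<lambda>n. ereal (linf_norm (avg y n))) = ereal l" "0 \<le> l" "l \<le> linf_norm y"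
    using limsup_bounded_real linf_norm_nonneg[OF avg_linf[OF y]] avg_linf_norm_le[OF y] by metis
  then show "limsup (\<lambda>n. ereal (linf_norm (avg y n))) = ereal (mean_limsup y)"
    "0 \<le> mean_limsup y" "mean_limsup y \<le> linf_norm y"
    unfolding mean_limsup_def by auto
qed

lemma mean_limsup_add:
  assumes x: "x \<in> linf" and y: "y \<in> linf"
  shows "mean_limsup (\<lambda>k. x k + y k) \<le> mean_limsup x + mean_limsup y"
proof -
  have "ereal (mean_limsup (\<lambda>k. x k + y k)) = limsup (\<lambda>n. ereal (linf_norm (avg (\<lambda>k. x k + y k) n)))"
    using mean_limsup_limsup[OF linf_add[OF x y]] by simp
  also have "\<dots> \<le> limsup (\<lambda>n. ereal (linf_norm (avg x n)) + ereal (linf_norm (avg y n)))"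
    by (rule Limsup_mono)
       (simp add: avg_add linf_norm_add[OF avg_linf[OF x] avg_linf[OF y]])
  also have "\<dots> \<le> limsup (\<lambda>n. ereal (linf_norm (avg x n))) + limsup (\<lambda>n. ereal (linf_norm (avg y n)))"
    by (rule ereal_limsup_add_mono)
  also have "\<dots> = ereal (mean_limsup x + mean_limsup y)"
    using mean_limsup_limsup[OF x] mean_limsup_limsup[OF y] by simp
  finally show ?thesis by simp
qed

lemma mean_limsup_scaleR:
  assumes y: "y \<in> linf"
  shows "mean_limsup (\<lambda>k. c *\<^sub>R y k) = \<bar>c\<bar> * mean_limsup y"
proof -
  have "ereal (mean_limsup (\<lambda>k. c *\<^sub>R y k)) = limsup (\<lambda>n. ereal \<bar>c\<bar> * ereal (linf_norm (avg y n)))"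
    using mean_limsup_limsup[OF linf_scaleR[OF y]]
    by (simp add: avg_scaleR linf_norm_scaleR[OF avg_linf[OF y]])
  also have "\<dots> = ereal \<bar>c\<bar> * limsup (\<lambda>n. ereal (linf_norm (avg y n)))"
    by (rule limsup_ereal_mult_left) simp
  also have "\<dots> = ereal (\<bar>c\<bar> * mean_limsup y)" using mean_limsup_limsup[OF y] by simp
  finally show ?thesis by simp
qed

text \<open>q vanishes on y (k + 1) - y k: its means telescope to (y (n + j) - y j) / n.\<close>

lemma mean_limsup_difference:
  assumes y: "y \<in> linf"
  shows "mean_limsup (\<lambda>k. y (Suc k) - y k) = 0"
proof -
  define B where "B = linf_norm y"
  have dl: "(\<lambda>k. y (Suc k) - y k) \<in> linf"
    using linf_diff[OF linf_shift[OF y, of 1] y] by simp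
  have bound: "linf_norm (avg (\<lambda>k. y (Suc k) - y k) n) \<le> 2 * B / real n" for n
  proof (rule linf_norm_le)
    fix j
    have "norm (y (n + j) - y j) \<le> 2 * B"
      using norm_triangle_ineq4[of "y (n + j)" "y j"] linf_norm_ge[OF y, of "n + j"]
        linf_norm_ge[OF y, of j] unfolding B_def by linarith
    then show "norm (avg (\<lambda>k. y (Suc k) - y k) n j) \<le> 2 * B / real n"
      by (simp add: avg_telescope divide_right_mono)
  qed
  have "ereal (mean_limsup (\<lambda>k. y (Suc k) - y k))
      = limsup (\<lambda>n. ereal (linf_norm (avg (\<lambda>k. y (Suc k) - y k) n)))"
    using mean_limsup_limsup[OF dl] by simp
  also have "\<dots> \<le> limsup (\<lambda>n. ereal (2 * B / real n))"
    by (rule Limsup_mono) (simp add: bound)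
  also have "\<dots> = ereal 0"
    by (rule lim_imp_Limsup) (simp_all add: lim_const_over_n)
  finally show ?thesis using mean_limsup_nonneg[OF dl] by simp
qed

text \<open>Since the sup norms of the means are non-negative, q(y) = 0 means they tend to 0.\<close>

lemma mean_limsup_eq_0_iff:
  assumes y: "y \<in> linf"
  shows "mean_limsup y = 0 \<longleftrightarrow> (\<lambda>n. linf_norm (avg y n)) \<longlonglongrightarrow> 0"
proof
  assume "mean_limsup y = 0"
  then have ls: "limsup (\<lambda>n. ereal (linf_norm (avg y n))) = ereal 0"
    using mean_limsup_limsup[OF y] by simp
  have "ereal 0 \<le> liminf (\<lambda>n. ereal (linf_norm (avg y n)))"
    by (rule Liminf_bounded) (simp add: linf_norm_nonneg[OF avg_linf[OF y]])
  moreover have "liminf (\<lambda>n. ereal (linf_norm (avg y n))) \<le> limsup (\<lambda>n. ereal (linf_norm (avg y n)))"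
    by (rule Liminf_le_Limsup) simp
  ultimately have "liminf (\<lambda>n. ereal (linf_norm (avg y n))) = ereal 0" using ls by simp
  then have "(\<lambda>n. ereal (linf_norm (avg y n))) \<longlonglongrightarrow> ereal 0"
    by (intro Liminf_eq_Limsup ls) simp_all
  then show "(\<lambda>n. linf_norm (avg y n)) \<longlonglongrightarrow> 0" by simp
next
  assume "(\<lambda>n. linf_norm (avg y n)) \<longlonglongrightarrow> 0"
  then have "limsup (\<lambda>n. ereal (linf_norm (avg y n))) = ereal 0"
    by (intro lim_imp_Limsup) simp_all
  then show "mean_limsup y = 0" using mean_limsup_limsup[OF y] by simp
qed

lemma uniform_limit_zero_iff_linf_norm:
  assumes a: "\<And>n. a n \<in> linf"
  shows "uniform_limit UNIV a (\<lambda>j. 0) sequentially \<longleftrightarrow> (\<lambda>n. linf_norm (a n)) \<longlonglongrightarrow> 0"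
proof
  assume u: "uniform_limit UNIV a (\<lambda>j. 0) sequentially"
  show "(\<lambda>n. linf_norm (a n)) \<longlonglongrightarrow> 0"
  proof (rule tendstoI)
    fix e :: real assume "e > 0"
    then have "e / 2 > 0" by simp
    then have "\<forall>\<^sub>F n in sequentially. \<forall>j\<in>UNIV. dist (a n j) 0 < e / 2"
      using u unfolding uniform_limit_iff by blast
    then show "\<forall>\<^sub>F n in sequentially. dist (linf_norm (a n)) 0 < e"
    proof eventually_elim
      case (elim n)
      then have "linf_norm (a n) \<le> e / 2" by (intro linf_norm_le) (simp add: less_imp_le)
      then show ?case using linf_norm_nonneg[OF a] \<open>e > 0\<close> by simp
    qed
  qed
next
  assume l: "(\<lambda>n. linf_norm (a n)) \<longlonglongrightarrow> 0"
  show "uniform_limit UNIV a (\<lambda>j. 0) sequentially"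
    unfolding uniform_limit_iff
  proof (intro allI impI)
    fix e :: real assume "e > 0"
    with l have "\<forall>\<^sub>F n in sequentially. dist (linf_norm (a n)) 0 < e" by (rule tendstoD)
    then show "\<forall>\<^sub>F n in sequentially. \<forall>j\<in>UNIV. dist (a n j) 0 < e"
      by eventually_elim (use linf_norm_ge[OF a] in \<open>fastforce intro: le_less_trans\<close>)
  qed
qed

lemma uniform_limit_avg_iff:
  assumes x: "x \<in> linf"
  shows "uniform_limit UNIV (avg x) (\<lambda>j. v) sequentially \<longleftrightarrow>
    (\<lambda>n. linf_norm (avg (\<lambda>k. x k - v) n)) \<longlonglongrightarrow> 0"
proof -
  have "uniform_limit UNIV (avg x) (\<lambda>j. v) sequentially \<longleftrightarrow>
      uniform_limit UNIV (\<lambda>n j. avg x n j - v) (\<lambda>j. 0) sequentially"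
    unfolding uniform_limit_iff by (simp add: dist_norm)
  also have "\<dots> \<longleftrightarrow> uniform_limit UNIV (avg (\<lambda>k. x k - v)) (\<lambda>j. 0) sequentially"
    by (intro uniform_limit_cong eventually_mono[OF eventually_gt_at_top[of 0]])
       (simp_all add: avg_minus_const)
  also have "\<dots> \<longleftrightarrow> (\<lambda>n. linf_norm (avg (\<lambda>k. x k - v) n)) \<longlonglongrightarrow> 0"
    by (intro uniform_limit_zero_iff_linf_norm avg_linf linf_diff x linf_const)
  finally show ?thesis .
qed

lemma complex_structureD:
  assumes "complex_structure J"
  shows complex_structure_linear: "linear J"
    and complex_structure_square: "J (J v) = - v"
    and norm_cscale: "norm (cscale J c v) = cmod c * norm v"
  using assms unfolding complex_structure_def by auto

lemma cscale_of_real: "cscale J (complex_of_real r) v = r *\<^sub>R v"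
  by (simp add: cscale_def)

lemma cscale_ii: "cscale J \<i> v = J v"
  by (simp add: cscale_def)

lemma linear_cscale: "linear J \<Longrightarrow> linear (cscale J c)"
  unfolding cscale_def
  by (rule linearI) (simp_all add: linear_add linear_scale algebra_simps)

lemma linf_cscale:
  assumes J: "complex_structure J" and y: "y \<in> linf"
  shows "(\<lambda>k. cscale J c (y k)) \<in> linf"
  by (rule linfI[of _ "cmod c * linf_norm y"])
     (simp add: norm_cscale[OF J] linf_norm_ge[OF y] mult_left_mono)

lemma linf_J: "complex_structure J \<Longrightarrow> y \<in> linf \<Longrightarrow> (\<lambda>k. J (y k)) \<in> linf"
  using linf_cscale[of J y \<i>] by (simp add: cscale_ii)

lemma mean_limsup_cscale:
  assumes J: "complex_structure J" and y: "y \<in> linf"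
  shows "mean_limsup (\<lambda>k. cscale J c (y k)) = cmod c * mean_limsup y"
proof -
  have "avg (\<lambda>k. cscale J c (y k)) n j = cscale J c (avg y n j)" for n j
    using linear_cscale[OF complex_structure_linear[OF J]]
    by (simp add: avg_def linear_scale linear_sum)
  then have "linf_norm (avg (\<lambda>k. cscale J c (y k)) n) = linf_norm (avg (\<lambda>k. cmod c *\<^sub>R y k) n)" for n
    by (intro linf_norm_cong) (simp add: norm_cscale[OF J] avg_scaleR)
  then have "mean_limsup (\<lambda>k. cscale J c (y k)) = mean_limsup (\<lambda>k. cmod c *\<^sub>R y k)"
    unfolding mean_limsup_def by simp
  then show ?thesis using mean_limsup_scaleR[OF y] by simp
qed

lemma banach_limitD:
  assumes "banach_limit J L"
  shows banach_limit_add: "x \<in> linf \<Longrightarrow> y \<in> linf \<Longrightarrow> L (\<lambda>n. x n + y n) = L x + L y"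
    and banach_limit_cscale: "y \<in> linf \<Longrightarrow> L (\<lambda>n. cscale J c (y n)) = c * L y"
    and banach_limit_norm: "y \<in> linf \<Longrightarrow> cmod (L y) \<le> linf_norm y"
    and banach_limit_Suc: "y \<in> linf \<Longrightarrow> L (\<lambda>n. y (Suc n)) = L y"
  using assms unfolding banach_limit_def by auto

lemma banach_limit_scaleR:
  "banach_limit J L \<Longrightarrow> y \<in> linf \<Longrightarrow> L (\<lambda>n. r *\<^sub>R y n) = complex_of_real r * L y"
  using banach_limit_cscale[of J L y "complex_of_real r"] by (simp add: cscale_of_real)

lemma banach_limit_shift:
  assumes L: "banach_limit J L" and y: "y \<in> linf"
  shows "L (\<lambda>n. y (k + n)) = L y"
proof (induction k)
  case (Suc k)
  have "L (\<lambda>n. y (Suc k + n)) = L (\<lambda>n. (\<lambda>m. y (k + m)) (Suc n))" by simp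
  also have "\<dots> = L (\<lambda>m. y (k + m))" by (rule banach_limit_Suc[OF L linf_shift[OF y]])
  finally show ?case using Suc by simp
qed simp

text \<open>By shift invariance a Banach limit does not see the passage to Cesaro means.\<close>

lemma banach_limit_avg:
  assumes L: "banach_limit J L" and y: "y \<in> linf" and N: "N > 0"
  shows "L (avg y N) = L y"
proof -
  have sum: "L (\<lambda>j. \<Sum>i<M. y (i + j)) = of_nat M * L y" for M
  proof (induction M)
    case 0
    show ?case using banach_limit_scaleR[OF L y, of 0] by simp
  next
    case (Suc M)
    have "L (\<lambda>j. \<Sum>i<Suc M. y (i + j)) = L (\<lambda>j. (\<Sum>i<M. y (i + j)) + y (M + j))" by simp
    also have "\<dots> = L (\<lambda>j. \<Sum>i<M. y (i + j)) + L (\<lambda>j. y (M + j))"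
      by (intro banach_limit_add[OF L] linf_sum linf_shift y)
    finally show ?case using Suc banach_limit_shift[OF L y, of M] by (simp add: algebra_simps)
  qed
  have "L (avg y N) = L (\<lambda>j. (1 / real N) *\<^sub>R (\<Sum>i<N. y (i + j)))"
    by (simp add: avg_def[abs_def])
  also have "\<dots> = complex_of_real (1 / real N) * (of_nat N * L y)"
    by (simp add: banach_limit_scaleR[OF L] linf_sum linf_shift y sum)
  finally show ?thesis using N by simp
qed

text \<open>Every Banach limit is dominated by q: |L y| \<le> |avg y N|_\<infinity> for all N > 0.\<close>

lemma banach_limit_le_mean_limsup:
  assumes L: "banach_limit J L" and y: "y \<in> linf"
  shows "cmod (L y) \<le> mean_limsup y"
proof -
  have "cmod (L y) \<le> linf_norm (avg y N)" if "N > 0" for N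
    using banach_limit_norm[OF L avg_linf[OF y], of N] banach_limit_avg[OF L y that] by simp
  then have "ereal (cmod (L y)) \<le> liminf (\<lambda>n. ereal (linf_norm (avg y n)))"
    by (intro Liminf_bounded eventually_mono[OF eventually_gt_at_top[of 0]]) simp
  also have "\<dots> \<le> limsup (\<lambda>n. ereal (linf_norm (avg y n)))" by (rule Liminf_le_Limsup) simp
  finally show ?thesis using mean_limsup_limsup[OF y] by simp
qed

definition real_linear_on_linf :: "((nat \<Rightarrow> 'a::real_normed_vector) \<Rightarrow> real) \<Rightarrow> bool" where
  "real_linear_on_linf g \<longleftrightarrow>
     (\<forall>x\<in>linf. \<forall>y\<in>linf. g (\<lambda>n. x n + y n) = g x + g y) \<and>
     (\<forall>r. \<forall>y\<in>linf. g (\<lambda>n. r *\<^sub>R y n) = r * g y)"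

lemma real_linear_on_linfD:
  assumes "real_linear_on_linf g"
  shows real_linear_on_linf_add: "x \<in> linf \<Longrightarrow> y \<in> linf \<Longrightarrow> g (\<lambda>n. x n + y n) = g x + g y"
    and real_linear_on_linf_scaleR: "y \<in> linf \<Longrightarrow> g (\<lambda>n. r *\<^sub>R y n) = r * g y"
  using assms unfolding real_linear_on_linf_def by auto

lemma real_linear_on_linf_diff:
  assumes g: "real_linear_on_linf g" and x: "x \<in> linf" and y: "y \<in> linf"
  shows "g (\<lambda>n. x n - y n) = g x - g y"
  using real_linear_on_linf_add[OF g x linf_scaleR[OF y, of "-1"]]
    real_linear_on_linf_scaleR[OF g y, of "-1"] by simp

text \<open>A real linear functional dominated by q is automatically shift invariant, since q
  vanishes on y (k + 1) - y k and on its negative.\<close>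

lemma dominated_real_linear_shift:
  assumes g: "real_linear_on_linf g" and dom: "\<And>y. y \<in> linf \<Longrightarrow> g y \<le> mean_limsup y"
    and y: "y \<in> linf"
  shows "g (\<lambda>n. y (Suc n)) = g y"
proof -
  have Ty: "(\<lambda>n. y (Suc n)) \<in> linf" using linf_shift[OF y, of 1] by simp
  have "g (\<lambda>n. y (Suc n)) - g y \<le> 0"
    using real_linear_on_linf_diff[OF g Ty y] dom[OF linf_diff[OF Ty y]] mean_limsup_difference[OF y]
    by simp
  moreover have "g y - g (\<lambda>n. y (Suc n)) \<le> 0"
    using real_linear_on_linf_diff[OF g y Ty] dom[OF linf_diff[OF y Ty]]
      mean_limsup_difference[OF linf_scaleR[OF y, of "-1"]] by simp
  ultimately show ?thesis by simp
qed

lemma dominated_real_functional: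
  assumes d: "d \<in> linf"
  obtains g :: "(nat \<Rightarrow> 'a::real_normed_vector) \<Rightarrow> real"
  where "real_linear_on_linf g" "\<And>y. y \<in> linf \<Longrightarrow> g y \<le> mean_limsup y" "g d = mean_limsup d"
proof -
  define p where "p b = mean_limsup (apply_bcontfun b)" for b :: "nat \<Rightarrow>\<^sub>C 'a"
  have "sublinear p"
    unfolding sublinear_def
  proof (intro conjI allI impI)
    fix a b :: "nat \<Rightarrow>\<^sub>C 'a"
    show "p (a + b) \<le> p a + p b"
      unfolding p_def plus_bcontfun.rep_eq by (intro mean_limsup_add apply_bcontfun_linf)
  next
    fix c :: real and a :: "nat \<Rightarrow>\<^sub>C 'a" assume "0 \<le> c"
    then show "p (c *\<^sub>R a) = c * p a"
      unfolding p_def scaleR_bcontfun.rep_eq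
      using mean_limsup_scaleR[OF apply_bcontfun_linf[of a], of c] by simp
  qed
  then obtain f where f: "linear f" "\<And>b. f b \<le> p b" "f (Bcontfun d) = p (Bcontfun d)"
    by (rule Hahn_Banach_sublinear[where z = "Bcontfun d"]) blast
  define g where "g y = f (Bcontfun y)" for y
  have "real_linear_on_linf g"
    unfolding real_linear_on_linf_def g_def
    by (simp add: Bcontfun_add Bcontfun_scaleR linear_add[OF f(1)] linear_scale[OF f(1)])
  moreover have "g y \<le> mean_limsup y" if "y \<in> linf" for y
    using f(2)[of "Bcontfun y"] that by (simp add: g_def p_def Bcontfun_inverse linf_bcontfun)
  moreover have "g d = mean_limsup d"
    using f(3) d by (simp add: g_def p_def Bcontfun_inverse linf_bcontfun)
  ultimately show ?thesis by (rule that)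
qed

definition complexify :: "('a \<Rightarrow> 'a) \<Rightarrow> ((nat \<Rightarrow> 'a) \<Rightarrow> real) \<Rightarrow> (nat \<Rightarrow> 'a) \<Rightarrow> complex" where
  "complexify J g y = complex_of_real (g y) - \<i> * complex_of_real (g (\<lambda>n. J (y n)))"

lemma Re_complexify: "Re (complexify J g y) = g y"
  by (simp add: complexify_def)

lemma complexify_cscale:
  assumes J: "complex_structure J" and g: "real_linear_on_linf g" and y: "y \<in> linf"
  shows "complexify J g (\<lambda>n. cscale J c (y n)) = c * complexify J g y"
proof -
  have linJ: "linear J" and Jy: "(\<lambda>n. J (y n)) \<in> linf"
    using complex_structure_linear[OF J] linf_J[OF J y] .
  have "g (\<lambda>n. cscale J c (y n)) = Re c * g y + Im c * g (\<lambda>n. J (y n))"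
    unfolding cscale_def
    by (simp add: real_linear_on_linf_add[OF g] real_linear_on_linf_scaleR[OF g] linf_scaleR y Jy)
  moreover have "(\<lambda>n. J (cscale J c (y n))) = (\<lambda>n. Re c *\<^sub>R J (y n) - Im c *\<^sub>R y n)"
    by (simp add: cscale_def linear_add[OF linJ] linear_scale[OF linJ] complex_structure_square[OF J])
  then have "g (\<lambda>n. J (cscale J c (y n))) = Re c * g (\<lambda>n. J (y n)) - Im c * g y"
    by (simp add: real_linear_on_linf_diff[OF g] real_linear_on_linf_scaleR[OF g] linf_scaleR y Jy)
  ultimately show ?thesis
    unfolding complexify_def by (simp add: complex_eq_iff algebra_simps)
qed

text \<open>If g is dominated by the rotation-invariant q, so is |L|: rotate L y onto the
  positive real axis and use Re L = g.\<close>

lemma complexify_norm_le: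
  assumes J: "complex_structure J" and g: "real_linear_on_linf g"
    and dom: "\<And>y. y \<in> linf \<Longrightarrow> g y \<le> mean_limsup y" and y: "y \<in> linf"
  shows "cmod (complexify J g y) \<le> mean_limsup y"
proof (cases "complexify J g y = 0")
  case True then show ?thesis using mean_limsup_nonneg[OF y] by simp
next
  case False
  define z where "z = complexify J g y"
  define e where "e = cnj z / complex_of_real (cmod z)"
  have e: "cmod e = 1" using False by (simp add: e_def z_def norm_divide)
  have "e * z = complex_of_real (cmod z)"
    using False complex_norm_square[of z] unfolding e_def z_def
    by (simp add: field_simps power2_eq_square)
  then have "cmod z = g (\<lambda>n. cscale J e (y n))"
    using Re_complexify[of J g] complexify_cscale[OF J g y, of e] unfolding z_def by (metis Re_complex_of_real)
  also have "\<dots> \<le> mean_limsup (\<lambda>n. cscale J e (y n))" by (rule dom[OF linf_cscale[OF J y]])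
  also have "\<dots> = mean_limsup y" using mean_limsup_cscale[OF J y, of e] e by simp
  finally show ?thesis by (simp add: z_def)
qed

text \<open>Hence the complexification of a real linear g \<le> q is a Banach limit (shift
  invariance of g being automatic).\<close>

lemma banach_limit_complexify:
  fixes J :: "'a::real_normed_vector \<Rightarrow> 'a"
  assumes J: "complex_structure J" and g: "real_linear_on_linf g"
    and dom: "\<And>y. y \<in> linf \<Longrightarrow> g y \<le> mean_limsup y"
  shows "banach_limit J (complexify J g)"
  unfolding banach_limit_def
proof (intro conjI ballI allI)
  fix x y :: "nat \<Rightarrow> 'a" assume x: "x \<in> linf" and y: "y \<in> linf"
  have "(\<lambda>n. J (x n + y n)) = (\<lambda>n. J (x n) + J (y n))"
    by (simp add: linear_add[OF complex_structure_linear[OF J]])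
  then show "complexify J g (\<lambda>n. x n + y n) = complexify J g x + complexify J g y"
    unfolding complexify_def
    by (simp add: real_linear_on_linf_add[OF g] x y linf_J[OF J] algebra_simps)
next
  fix c and y :: "nat \<Rightarrow> 'a" assume "y \<in> linf"
  then show "complexify J g (\<lambda>n. cscale J c (y n)) = c * complexify J g y"
    by (rule complexify_cscale[OF J g])
next
  fix y :: "nat \<Rightarrow> 'a" assume y: "y \<in> linf"
  show "cmod (complexify J g y) \<le> linf_norm y"
    using complexify_norm_le[OF J g dom y] mean_limsup_le_linf_norm[OF y] by linarith
  show "complexify J g (\<lambda>n. y (Suc n)) = complexify J g y"
    unfolding complexify_def
    using dominated_real_linear_shift[OF g dom] y linf_J[OF J y] by simp
qed

lemma banach_limit_attaining_mean_limsup: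
  assumes J: "complex_structure J" and d: "d \<in> linf"
  obtains L where "banach_limit J L" "L d = complex_of_real (mean_limsup d)"
proof -
  obtain g where g: "real_linear_on_linf g" and dom: "\<And>y. y \<in> linf \<Longrightarrow> g y \<le> mean_limsup y"
    and gd: "g d = mean_limsup d"
    using dominated_real_functional[OF d] by blast
  define L where "L = complexify J g"
  have L: "banach_limit J L" unfolding L_def by (rule banach_limit_complexify[OF J g dom])
  have Re: "Re (L d) = mean_limsup d" unfolding L_def Re_complexify gd ..
  have "(Re (L d))\<^sup>2 + (Im (L d))\<^sup>2 = (cmod (L d))\<^sup>2" by (simp add: cmod_def)
  also have "\<dots> \<le> (Re (L d))\<^sup>2"
    using banach_limit_le_mean_limsup[OF L d] Re by (simp add: power_mono)
  finally have "Im (L d) = 0" by simp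
  then have "L d = complex_of_real (mean_limsup d)" using Re by (simp add: complex_eq_iff)
  with L show ?thesis by (rule that)
qed

text \<open>Strong almost convergence of x to v means exactly q(x - v) = 0: every Banach limit
  of x - v is bounded by q(x - v), and some Banach limit attains it.\<close>

lemma strongly_almost_convergent_iff_mean_limsup:
  assumes J: "complex_structure J" and x: "x \<in> linf"
  shows "strongly_almost_convergent J x v \<longleftrightarrow> mean_limsup (\<lambda>k. x k - v) = 0"
proof -
  define d where "d = (\<lambda>k. x k - v)"
  have d: "d \<in> linf" unfolding d_def by (intro linf_diff x linf_const)
  have L_split: "L x = L d + L (\<lambda>_. v)" if "banach_limit J L" for L
    using banach_limit_add[OF that d linf_const, of v] by (simp add: d_def)
  show ?thesis
    unfolding strongly_almost_convergent_def d_def[symmetric]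
  proof
    assume sac: "\<forall>L. banach_limit J L \<longrightarrow> L x = L (\<lambda>_. v)"
    obtain L where L: "banach_limit J L" and Ld: "L d = complex_of_real (mean_limsup d)"
      using banach_limit_attaining_mean_limsup[OF J d] by blast
    have "L x = L (\<lambda>_. v)" using sac L by blast
    then show "mean_limsup d = 0" using L_split[OF L] Ld by simp
  next
    assume q: "mean_limsup d = 0"
    show "\<forall>L. banach_limit J L \<longrightarrow> L x = L (\<lambda>_. v)"
    proof (intro allI impI)
      fix L assume L: "banach_limit J L"
      have "L d = 0" using banach_limit_le_mean_limsup[OF L d] q by simp
      then show "L x = L (\<lambda>_. v)" using L_split[OF L] by simp
    qed
  qed
qed

theorem mainTheorem14:
  fixes J :: "'a::real_normed_vector \<Rightarrow> 'a" and x :: "nat \<Rightarrow> 'a" and v :: 'a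
  assumes "complex_structure J"
    and "x \<in> linf"
  shows "strongly_almost_convergent J x v \<longleftrightarrow>
    uniform_limit UNIV (\<lambda>n j. (1 / real n) *\<^sub>R (\<Sum>i<n. x (i + j))) (\<lambda>j. v) sequentially"
proof -
  have "(\<lambda>n j. (1 / real n) *\<^sub>R (\<Sum>i<n. x (i + j))) = avg x"
    by (simp add: avg_def[abs_def])
  moreover have d: "(\<lambda>k. x k - v) \<in> linf" by (intro linf_diff assms(2) linf_const)
  ultimately show ?thesis
    using strongly_almost_convergent_iff_mean_limsup[OF assms] mean_limsup_eq_0_iff[OF d]
      uniform_limit_avg_iff[OF assms(2)] by simp
qed

end
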